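(* Let $\mathcal L(x,E)=\partial_x+\frac{\ell}{x}+e+p(x,E)e_0$ with $p(x,E)=x^{Mh^\vee}-E$, and let $h\in\mathfrak h$ satisfy $[h,e]=e$ and $[h,e_0]=-(h^\vee-1)e_0$. Then the gauge transformed connection $q(x,E)^{\operatorname{ad}h}\mathcal L(x,E):=q(x,E)^{h}\circ\mathcal L(x,E)\circ q(x,E)^{-h}$ satisfies $$q(x,E)^{\operatorname{ad}h}\mathcal L(x,E)=\partial_x+q(x,E)\Lambda+\frac{\ell-Mh}{x}+O(x^{-1-\delta}),\qquad x\to+\infty,$$ where $\Lambda=e_0+e$.
   Context: $\mathfrak g$ is a simple complex Lie algebra of type $A$, $D$ or $E$ with Chevalley generators $\{f_i,h_i,e_i\}_{i=1}^n$, Cartan subalgebra $\mathfrak h=\bigoplus\mathbb Ch_i$, dual Coxeter number $h^\vee$, normalized invariant form $(a|b)=\kappa(a,b)/h^\vee$ ($\kappa$ the Killing form). The affine Kac–Moody algebra is $\widehat{\mathfrak g}=\mathfrak g\otimes\mathbb C[t,t^{-1}]\oplus\mathbb Cc$ with $[a\otimes f,b\otimes g]=[a,b]\otimes fg+(a|b)\operatorname{res}_{t=0}(f'g\,dt)c$ and $c$ central; $e_0=a_0\otimes t$ with $a_0$ a nonzero element of the root space $\mathfrak g_{-\theta}$, $-\theta$ the lowest root; $e=\sum_{i=1}^ne_i$. Fix $\ell\in\mathfrak h$, $M>0$, $E\in\mathbb C$. Let $s=\lfloor\frac{M+1}{h^\vee M}\rfloor$, $\delta=M(h^\vee(1+s)-1)-1>0$,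 and $q(x,E)=x^M+\sum_{j=1}^s c_j(E)x^{M(1-h^\vee j)}$, where $c_j(E)=\binom{1/h^\vee}{j}(-E)^j$, so that $p(x,E)^{1/h^\vee}=q(x,E)+O(x^{-1-\delta})$ as $x\to+\infty$ (branches real positive for large positive $x$). *)

theory Defs
  imports "HOL-Analysis.Analysis" "HOL-Library.Landau_Symbols"
begin

text \<open>The simple Lie algebra g is modelled as the complex vector space complex^'d
  (d = dim g) with a Lie bracket br.  Indices of Chevalley generators run over 1..n.\<close>

definition lie_bracket :: "(complex^'d \<Rightarrow> complex^'d \<Rightarrow> complex^'d) \<Rightarrow> bool" where
  "lie_bracket br \<longleftrightarrow>
     (\<forall>a b c. br (a + b) c = br a c + br b c) \<and>
     (\<forall>a b c. br a (b + c) = br a b + br a c) \<and>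
     (\<forall>(k::complex) a b. br (k *s a) b = k *s br a b) \<and>
     (\<forall>(k::complex) a b. br a (k *s b) = k *s br a b) \<and>
     (\<forall>a. br a a = 0) \<and>
     (\<forall>a b c. br a (br b c) + br b (br c a) + br c (br a b) = 0)"

inductive_set lie_gen :: "(complex^'d \<Rightarrow> complex^'d \<Rightarrow> complex^'d) \<Rightarrow> (complex^'d) set \<Rightarrow> (complex^'d) set"
  for br S where
  gen: "x \<in> S \<Longrightarrow> x \<in> lie_gen br S"
| add: "x \<in> lie_gen br S \<Longrightarrow> y \<in> lie_gen br S \<Longrightarrow> x + y \<in> lie_gen br S"
| smult: "x \<in> lie_gen br S \<Longrightarrow> (k::complex) *s x \<in> lie_gen br S"
| brk: "x \<in> lie_gen br S \<Longrightarrow> y \<in> lie_gen br S \<Longrightarrow> br x y \<in> lie_gen br S"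

definition ADE_cartan :: "nat \<Rightarrow> (nat \<Rightarrow> nat \<Rightarrow> int) \<Rightarrow> bool" where
  "ADE_cartan n A \<longleftrightarrow> n \<ge> 1 \<and>
     (\<forall>i\<in>{1..n}. A i i = 2) \<and>
     (\<forall>i\<in>{1..n}. \<forall>j\<in>{1..n}. i \<noteq> j \<longrightarrow> A i j \<in> {0, -1}) \<and>
     (\<forall>i\<in>{1..n}. \<forall>j\<in>{1..n}. A i j = A j i) \<and>
     (\<forall>c::nat \<Rightarrow> real. (\<exists>i\<in>{1..n}. c i \<noteq> 0) \<longrightarrow>
        (\<Sum>i\<in>{1..n}. \<Sum>j\<in>{1..n}. c i * of_int (A i j) * c j) > 0) \<and>
     (\<forall>S. S \<subseteq> {1..n} \<and> S \<noteq> {} \<and> S \<noteq> {1..n} \<longrightarrow>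
        (\<exists>i\<in>S. \<exists>j\<in>{1..n} - S. A i j \<noteq> 0))"

text \<open>(br, e, f, hh) is a simple Lie algebra of type ADE with Cartan matrix A and Chevalley
  generators e_i, f_i, h_i (Chevalley--Serre relations, generation, independent h_i;
  by Serre's theorem this characterises g(A) up to isomorphism).\<close>
definition simple_ADE ::
  "(complex^'d \<Rightarrow> complex^'d \<Rightarrow> complex^'d) \<Rightarrow> nat \<Rightarrow> (nat \<Rightarrow> nat \<Rightarrow> int)
   \<Rightarrow> (nat \<Rightarrow> complex^'d) \<Rightarrow> (nat \<Rightarrow> complex^'d) \<Rightarrow> (nat \<Rightarrow> complex^'d) \<Rightarrow> bool" where
  "simple_ADE br n A e f hh \<longleftrightarrow>
     lie_bracket br \<and> ADE_cartan n A \<and>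
     (\<forall>i\<in>{1..n}. \<forall>j\<in>{1..n}. br (hh i) (hh j) = 0) \<and>
     (\<forall>i\<in>{1..n}. \<forall>j\<in>{1..n}. br (e i) (f j) = (if i = j then hh i else 0)) \<and>
     (\<forall>i\<in>{1..n}. \<forall>j\<in>{1..n}. br (hh i) (e j) = of_int (A i j) *s e j) \<and>
     (\<forall>i\<in>{1..n}. \<forall>j\<in>{1..n}. br (hh i) (f j) = - (of_int (A i j) *s f j)) \<and>
     (\<forall>i\<in>{1..n}. \<forall>j\<in>{1..n}. i \<noteq> j \<longrightarrow>
        (br (e i) ^^ nat (1 - A i j)) (e j) = 0 \<and> (br (f i) ^^ nat (1 - A i j)) (f j) = 0) \<and>
     lie_gen br (e ` {1..n} \<union> f ` {1..n} \<union> hh ` {1..n}) = UNIV \<and>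
     (\<forall>c::nat \<Rightarrow> complex. (\<Sum>i\<in>{1..n}. c i *s hh i) = 0 \<longrightarrow> (\<forall>i\<in>{1..n}. c i = 0))"

definition cartan :: "nat \<Rightarrow> (nat \<Rightarrow> complex^'d) \<Rightarrow> (complex^'d) set" where
  "cartan n hh = {x. \<exists>c::nat \<Rightarrow> complex. x = (\<Sum>i\<in>{1..n}. c i *s hh i)}"

text \<open>Weights are recorded by their values on h_1..h_n.  The weight
  - sum_i c_i alpha_i (alpha_i simple roots, alpha_i(h_j) = A j i).\<close>
definition neg_weight :: "nat \<Rightarrow> (nat \<Rightarrow> nat \<Rightarrow> int) \<Rightarrow> (nat \<Rightarrow> nat) \<Rightarrow> nat \<Rightarrow> complex" where
  "neg_weight n A c = (\<lambda>j. - (\<Sum>i\<in>{1..n}. of_int (A j i) * of_nat (c i)))"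

definition root_space ::
  "(complex^'d \<Rightarrow> complex^'d \<Rightarrow> complex^'d) \<Rightarrow> nat \<Rightarrow> (nat \<Rightarrow> complex^'d) \<Rightarrow> (nat \<Rightarrow> complex) \<Rightarrow> (complex^'d) set" where
  "root_space br n hh w = {a. \<forall>j\<in>{1..n}. br (hh j) a = w j *s a}"

definition is_root ::
  "(complex^'d \<Rightarrow> complex^'d \<Rightarrow> complex^'d) \<Rightarrow> nat \<Rightarrow> (nat \<Rightarrow> complex^'d) \<Rightarrow> (nat \<Rightarrow> complex) \<Rightarrow> bool" where
  "is_root br n hh w \<longleftrightarrow> (\<exists>j\<in>{1..n}. w j \<noteq> 0) \<and> (\<exists>a. a \<noteq> 0 \<and> a \<in> root_space br n hh w)"

text \<open>c are the coefficients of the highest root theta = sum c_i alpha_i, characterised by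
  -theta being the lowest root: every root minus (-theta) is a nonnegative integer
  combination of simple roots.\<close>
definition theta_coeffs_prop ::
  "(complex^'d \<Rightarrow> complex^'d \<Rightarrow> complex^'d) \<Rightarrow> nat \<Rightarrow> (nat \<Rightarrow> nat \<Rightarrow> int) \<Rightarrow> (nat \<Rightarrow> complex^'d) \<Rightarrow> (nat \<Rightarrow> nat) \<Rightarrow> bool" where
  "theta_coeffs_prop br n A hh c \<longleftrightarrow>
     (\<forall>i. i \<notin> {1..n} \<longrightarrow> c i = 0) \<and>
     is_root br n hh (neg_weight n A c) \<and>
     (\<forall>w. is_root br n hh w \<longrightarrow>
        (\<exists>d::nat \<Rightarrow> nat. \<forall>j\<in>{1..n}.
           w j = neg_weight n A c j + (\<Sum>i\<in>{1..n}. of_int (A j i) * of_nat (d i))))"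

definition theta_coeffs where
  "theta_coeffs br n A hh = (THE c. theta_coeffs_prop br n A hh c)"

text \<open>Dual Coxeter number: 1 + sum of the comarks (= marks, simply laced).\<close>
definition dual_coxeter where
  "dual_coxeter br n A hh = 1 + (\<Sum>i\<in>{1..n}. theta_coeffs br n A hh i)"

definition lowest_root_space where
  "lowest_root_space br n A hh = root_space br n hh (neg_weight n A (theta_coeffs br n A hh))"

text \<open>Elements of the affine algebra g[t,t^-1] + C c: the coefficient of t^k, and the
  central component.\<close>
type_synonym 'd affine = "(int \<Rightarrow> complex^'d) \<times> complex"

definition q_ad :: "(complex^'d \<Rightarrow> complex^'d \<Rightarrow> complex^'d) \<Rightarrow> complex^'d \<Rightarrow> complex \<Rightarrow> complex^'d \<Rightarrow> complex^'d" where
  "q_ad br h q a = (\<Sum>k. ((Ln q) ^ k / fact k) *s ((br h ^^ k) a))"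

text \<open>A connection d/dx + A(x) is represented by A :: real => affine.  The gauge transform
  q^h o (d/dx + A) o q^(-h) = d/dx + q^(ad h) A - (q'/q) h; since h is a constant element
  of the Cartan subalgebra, ad h acts coefficientwise and kills the centre.\<close>
definition gauge :: "(complex^'d \<Rightarrow> complex^'d \<Rightarrow> complex^'d) \<Rightarrow> complex^'d \<Rightarrow> (real \<Rightarrow> complex)
   \<Rightarrow> (real \<Rightarrow> 'd affine) \<Rightarrow> (real \<Rightarrow> 'd affine)" where
  "gauge br h Q A = (\<lambda>x. ((\<lambda>k. q_ad br h (Q x) (fst (A x) k)
        - (if k = 0 then (vector_derivative Q (at x) / Q x) *s h else 0)), snd (A x)))"

definition p_fun :: "real \<Rightarrow> nat \<Rightarrow> complex \<Rightarrow> real \<Rightarrow> complex" where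
  "p_fun M hv E x = of_real (x powr (M * real hv)) - E"

definition s_idx :: "real \<Rightarrow> nat \<Rightarrow> nat" where
  "s_idx M hv = nat \<lfloor>(M + 1) / (real hv * M)\<rfloor>"

definition delta :: "real \<Rightarrow> nat \<Rightarrow> real" where
  "delta M hv = M * (real hv * (1 + real (s_idx M hv)) - 1) - 1"

definition c_coef :: "nat \<Rightarrow> complex \<Rightarrow> nat \<Rightarrow> complex" where
  "c_coef hv E j = ((1 / of_nat hv) gchoose j) * (- E) ^ j"

definition q_fun :: "real \<Rightarrow> nat \<Rightarrow> complex \<Rightarrow> real \<Rightarrow> complex" where
  "q_fun M hv E x = of_real (x powr M)
     + (\<Sum>j\<in>{1..s_idx M hv}. c_coef hv E j * of_real (x powr (M * (1 - real hv * real j))))"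

text \<open>L(x,E) = d/dx + l/x + e + p(x,E) e_0, e_0 = a0 (x) t.\<close>
definition L_conn :: "complex^'d \<Rightarrow> complex^'d \<Rightarrow> complex^'d \<Rightarrow> real \<Rightarrow> nat \<Rightarrow> complex \<Rightarrow> real \<Rightarrow> 'd affine" where
  "L_conn l e a0 M hv E x =
     ((\<lambda>k. if k = 0 then (of_real (1 / x) :: complex) *s l + e
           else if k = 1 then p_fun M hv E x *s a0 else 0), 0)"

definition target_conn :: "complex^'d \<Rightarrow> complex^'d \<Rightarrow> complex^'d \<Rightarrow> complex^'d \<Rightarrow> real \<Rightarrow> nat \<Rightarrow> complex \<Rightarrow> real \<Rightarrow> 'd affine" where
  "target_conn l h e a0 M hv E x =
     ((\<lambda>k. if k = 0 then q_fun M hv E x *s e + (of_real (1 / x) :: complex) *s (l - (of_real M :: complex) *s h)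
           else if k = 1 then q_fun M hv E x *s a0 else 0), 0)"

end

theory Submission
  imports Defs "HOL-Computational_Algebra.Polynomial_FPS"
begin

text \<open>Write hv for the dual Coxeter number. Since h is Cartan, ad h acts diagonally on the
  coefficients of L: it kills l/x, and has eigenvalue 1 on e and 1 - hv on e_0. So the gauge
  transformation multiplies e by q and p e_0 by q^(1-hv) p, and contributes -(q'/q) h. The
  difference to the target is therefore (M/x - q'/q) h in degree 0 and (q^(1-hv) p - q) e_0 in
  degree 1, and everything reduces to two scalar estimates.

  With \<zeta> = -E x^(-M hv) we have p = x^(M hv) (1 + \<zeta>) and q = x^M T(\<zeta>), where T is the
  binomial series of (1 + \<zeta>)^(1/hv) truncated at order s. Hence T(\<zeta>)^hv - (1 + \<zeta>) = O(\<zeta>^(s+1)),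
  so q^(1-hv) p - q = O(x^M \<zeta>^(s+1)) = O(x^(-1-\<delta>)); and
  M/x - q'/q = M hv \<zeta> T'(\<zeta>) / (x T(\<zeta>)) = O(x^(-1 - M hv)), which suffices as \<delta> \<le> M hv.\<close>

lemma norm_smult_vec: "norm (c *s w) = norm c * norm (w :: 'a::real_normed_field ^ 'n)"
proof -
  have "norm (c *s w) = L2_set (\<lambda>i. norm c * norm (w $ i)) UNIV"
    unfolding norm_vec_def by (simp add: norm_mult)
  also have "\<dots> = norm c * norm w"
    unfolding norm_vec_def by (simp add: L2_set_right_distrib)
  finally show ?thesis .
qed

lemma bounded_linear_smult_vec: "bounded_linear (\<lambda>c. c *s (w :: 'a::real_normed_field ^ 'n))"
proof (rule bounded_linear_intro[where K = "norm w"])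
  show "(r *\<^sub>R c) *s w = r *\<^sub>R (c *s w)" for r c
    by (vector scaleR_conv_of_real)
qed (simp_all add: norm_smult_vec)

lemma norm_smult_vec_bigo:
  fixes f :: "'b \<Rightarrow> 'a::real_normed_field" and w :: "'a ^ 'n"
  assumes "f \<in> O[F](\<lambda>x. of_real (g x))"
  shows "(\<lambda>x. norm (f x *s w)) \<in> O[F](g)"
proof -
  have "(\<lambda>x. norm (f x)) \<in> O[F](\<lambda>x. norm (of_real (g x) :: 'a))"
    using assms by (simp only: landau_o.big.norm_iff)
  then have "(\<lambda>x. norm (f x) * norm w) \<in> O[F](g)"
    by simp
  then show ?thesis by (simp add: norm_smult_vec)
qed

context
  fixes br :: "complex^'d \<Rightarrow> complex^'d \<Rightarrow> complex^'d"
  assumes lie: "lie_bracket br"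
begin

lemma bracket_add_left: "br (a + b) c = br a c + br b c"
  using lie unfolding lie_bracket_def by blast

lemma bracket_add_right: "br a (b + c) = br a b + br a c"
  using lie unfolding lie_bracket_def by blast

lemma bracket_smult_left: "br (k *s a) b = k *s br a b"
  using lie unfolding lie_bracket_def by blast

lemma bracket_smult_right: "br a (k *s b) = k *s br a b"
  using lie unfolding lie_bracket_def by blast

lemma bracket_zero_right: "br a 0 = 0"
  using bracket_add_right[of a 0 0] by simp

lemma bracket_zero_left: "br 0 b = 0"
  using bracket_add_left[of 0 0 b] by simp

lemma bracket_sum_left: "finite S \<Longrightarrow> br (sum f S) b = (\<Sum>i\<in>S. br (f i) b)"
  by (induction S rule: finite_induct) (auto simp: bracket_zero_left bracket_add_left)

lemma bracket_sum_right: "finite S \<Longrightarrow> br b (sum f S) = (\<Sum>i\<in>S. br b (f i))"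
  by (induction S rule: finite_induct) (auto simp: bracket_zero_right bracket_add_right)

lemma funpow_bracket_add: "(br h ^^ k) (u + w) = (br h ^^ k) u + (br h ^^ k) w"
  by (induction k) (simp_all add: bracket_add_right)

lemma funpow_bracket_eigen:
  assumes "br h w = c *s w"
  shows "(br h ^^ k) w = c ^ k *s w"
  by (induction k) (simp_all add: assms bracket_smult_right mult.commute)

lemma q_ad_eigen_sums:
  assumes "br h w = c *s w"
  shows "(\<lambda>k. ((Ln q) ^ k / fact k) *s (br h ^^ k) w) sums (exp (c * Ln q) *s w)"
proof -
  have "(\<lambda>k. (c * Ln q) ^ k / fact k) sums exp (c * Ln q)"
    using exp_converges[of "c * Ln q"] by (simp add: scaleR_conv_of_real divide_inverse mult.commute)
  from bounded_linear.sums[OF bounded_linear_smult_vec this, of w] show ?thesis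
    by (simp add: funpow_bracket_eigen[OF assms] power_mult_distrib mult.commute)
qed

lemma q_ad_eigen_add:
  assumes "br h u = a *s u" "br h w = b *s w" "q \<noteq> 0"
  shows "q_ad br h q (u + w) = q powr a *s u + q powr b *s w"
proof -
  have "(\<lambda>k. ((Ln q) ^ k / fact k) *s (br h ^^ k) (u + w))
          sums (exp (a * Ln q) *s u + exp (b * Ln q) *s w)"
    using sums_add[OF q_ad_eigen_sums[OF assms(1)] q_ad_eigen_sums[OF assms(2)]]
    by (simp add: funpow_bracket_add)
  then show ?thesis
    using assms(3) unfolding q_ad_def by (simp add: sums_iff powr_def mult.commute)
qed

lemma q_ad_eigen:
  assumes "br h w = b *s w" "q \<noteq> 0"
  shows "q_ad br h q w = q powr b *s w"
  using q_ad_eigen_add[of h 0 0 w b q] assms by (simp add: bracket_zero_right)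

lemma gauge_L_conn_minus_target:
  assumes "br h l = 0" "br h e = e" "br h a0 = c *s a0" "q_fun M hv E x \<noteq> 0"
  shows "fst (gauge br h (q_fun M hv E) (L_conn l e a0 M hv E) x) k - fst (target_conn l h e a0 M hv E x) k
    = (if k = 0 then (of_real M / of_real x - vector_derivative (q_fun M hv E) (at x) / q_fun M hv E x) *s h
       else if k = 1 then (q_fun M hv E x powr c * p_fun M hv E x - q_fun M hv E x) *s a0
       else 0)"
proof -
  let ?q = "q_fun M hv E x"
  have "q_ad br h ?q ((of_real (1 / x) :: complex) *s l + e) = (of_real (1 / x) :: complex) *s l + ?q *s e"
    using q_ad_eigen_add[of h "(of_real (1 / x) :: complex) *s l" 0 e 1 ?q] assms
    by (simp add: bracket_smult_right)
  moreover have "q_ad br h ?q (p_fun M hv E x *s a0) = (?q powr c * p_fun M hv E x) *s a0"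
    using q_ad_eigen[of h "p_fun M hv E x *s a0" c ?q] assms
    by (simp add: bracket_smult_right mult.commute)
  moreover have "q_ad br h ?q 0 = 0"
    using q_ad_eigen[of h 0 0 ?q] assms by (simp add: bracket_zero_right)
  ultimately show ?thesis
    unfolding gauge_def L_conn_def target_conn_def
    by (simp add: algebra_simps)
qed

end

lemma bracket_cartan_cartan:
  assumes "simple_ADE br n A e f hh" "h \<in> cartan n hh" "l \<in> cartan n hh"
  shows "br h l = 0"
proof -
  have lie: "lie_bracket br" and abelian: "\<forall>i\<in>{1..n}. \<forall>j\<in>{1..n}. br (hh i) (hh j) = 0"
    using assms(1) unfolding simple_ADE_def by blast+
  obtain ch cl where "h = (\<Sum>i\<in>{1..n}. ch i *s hh i)" "l = (\<Sum>i\<in>{1..n}. cl i *s hh i)"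
    using assms(2,3) unfolding cartan_def by blast
  with abelian show ?thesis
    by (simp add: bracket_sum_left[OF lie] bracket_sum_right[OF lie]
                  bracket_smult_left[OF lie] bracket_smult_right[OF lie])
qed

lemma fps_cutoff_power: "fps_cutoff n (fps_cutoff n f ^ k) = fps_cutoff n (f ^ k)"
proof (induction k)
  case (Suc k)
  have "fps_nth (fps_cutoff n f * fps_cutoff n f ^ k) m = fps_nth (f * f ^ k) m" if "m < n" for m
  proof -
    have "fps_nth (fps_cutoff n f * fps_cutoff n f ^ k) m = fps_nth (fps_cutoff n f * fps_cutoff n (fps_cutoff n f ^ k)) m"
      using that by (simp add: fps_cutoff_right_mult_nth)
    also have "\<dots> = fps_nth (fps_cutoff n f * f ^ k) m"
      using that by (simp add: Suc fps_cutoff_right_mult_nth)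
    also have "\<dots> = fps_nth (f * f ^ k) m"
      using that by (simp add: fps_cutoff_left_mult_nth)
    finally show ?thesis .
  qed
  then show ?case by (simp add: fps_cutoff_eq_fps_cutoff_iff)
qed simp

lemma coeff_truncate_fps_power:
  assumes "k < n"
  shows "coeff (truncate_fps n F ^ m) k = fps_nth (F ^ m) k"
proof -
  have "coeff (truncate_fps n F ^ m) k = fps_nth (fps_cutoff n (fps_cutoff n F ^ m)) k"
    using assms by (simp flip: fps_of_poly_nth add: fps_of_poly_power)
  then show ?thesis
    using assms by (simp only: fps_cutoff_power) simp
qed

lemma poly_vanishing_to_order_bigo:
  fixes P :: "'a::real_normed_field poly"
  assumes "\<forall>k\<le>s. coeff P k = 0" "(f \<longlongrightarrow> 0) F"
  shows "(\<lambda>x. poly P (f x)) \<in> O[F](\<lambda>x. f x ^ Suc s)"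
proof -
  obtain Q where P: "P = monom 1 (Suc s) * Q"
  proof -
    have "monom 1 (Suc s) dvd P"
      using assms(1) by (simp add: monom_1_dvd_iff' less_Suc_eq_le)
    then show ?thesis using that by (auto elim!: dvdE)
  qed
  have "(\<lambda>x. poly Q (f x)) \<in> O[F](\<lambda>_. 1)"
    by (rule bigoI_tendsto[where c = "poly Q 0"]) (simp_all add: tendsto_poly assms(2))
  then show ?thesis
    by (simp add: P poly_monom landau_o.big_1_mult)
qed

definition zeta_fun :: "real \<Rightarrow> nat \<Rightarrow> complex \<Rightarrow> real \<Rightarrow> complex" where
  "zeta_fun M hv E x = - E * of_real (x powr (- (M * real hv)))"

definition root_series_trunc :: "nat \<Rightarrow> nat \<Rightarrow> complex poly" where
  "root_series_trunc hv s = truncate_fps (Suc s) (fps_binomial (1 / of_nat hv))"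

lemma poly_root_series_trunc:
  "poly (root_series_trunc hv s) z = (\<Sum>j\<le>s. ((1 / of_nat hv) gchoose j) * z ^ j)"
proof -
  have "degree (root_series_trunc hv s) \<le> s"
    using degree_truncate_fps[of "Suc s"] unfolding root_series_trunc_def by (simp add: less_Suc_eq_le)
  from poly_as_sum_of_monoms'[OF this] show ?thesis
    by (subst (asm) eq_commute) (simp add: root_series_trunc_def poly_sum poly_monom)
qed

lemma coeff_root_series_trunc_power:
  assumes "hv \<ge> 1" "k \<le> s"
  shows "coeff (root_series_trunc hv s ^ hv - [:1, 1:]) k = 0"
proof -
  have "fps_binomial (1 / of_nat hv :: complex) ^ hv = fps_of_poly [:1, 1:]"
    using assms by (simp add: fps_binomial_power fps_binomial_1 fps_of_poly_linear')
  then show ?thesis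
    using assms unfolding root_series_trunc_def
    by (simp add: coeff_diff coeff_truncate_fps_power del: fps_of_poly_linear')
qed

lemma q_fun_eq_trunc:
  assumes "x > 0"
  shows "q_fun M hv E x
    = of_real (x powr M) * poly (root_series_trunc hv (s_idx M hv)) (zeta_fun M hv E x)"
proof -
  let ?z = "zeta_fun M hv E x"
  have summand: "c_coef hv E j * of_real (x powr (M * (1 - real hv * real j)))
      = of_real (x powr M) * (((1 / of_nat hv) gchoose j) * ?z ^ j)" for j
  proof -
    have "x powr (M * (1 - real hv * real j)) = x powr M * (x powr (- (M * real hv))) ^ j"
      using assms by (simp add: powr_power powr_add[symmetric] algebra_simps)
    then show ?thesis
      by (simp add: c_coef_def zeta_fun_def power_mult_distrib)
         (metis minus_mult_left power_mult_distrib)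
  qed
  have "poly (root_series_trunc hv (s_idx M hv)) ?z
      = 1 + (\<Sum>j\<in>{1..s_idx M hv}. ((1 / of_nat hv) gchoose j) * ?z ^ j)"
    unfolding poly_root_series_trunc by (simp add: atMost_atLeast0 sum.atLeast_Suc_atMost)
  then show ?thesis
    unfolding q_fun_def summand by (simp add: sum_distrib_left distrib_left)
qed

lemma p_fun_eq:
  assumes "x > 0"
  shows "p_fun M hv E x = of_real (x powr M) ^ hv * (1 + zeta_fun M hv E x)"
proof -
  have "(x powr M) ^ hv = x powr (M * real hv)"
    using assms by (simp add: powr_power mult.commute)
  moreover have "x powr (M * real hv) * x powr (- (M * real hv)) = 1"
    using assms by (simp add: powr_add[symmetric])
  ultimately show ?thesis
    unfolding p_fun_def zeta_fun_def
    by (simp add: algebra_simps flip: of_real_mult of_real_power)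
qed

lemma has_vector_derivative_of_real_powr:
  assumes "x > 0"
  shows "((\<lambda>y. complex_of_real (y powr r)) has_vector_derivative
            of_real r / of_real x * of_real (x powr r)) (at x)"
proof -
  have "((\<lambda>y. complex_of_real (y powr r)) has_vector_derivative of_real (r * x powr (r - 1))) (at x)"
    by (intro has_vector_derivative_of_real has_real_derivative_powr assms)
  then show ?thesis
    using assms by (simp add: powr_diff)
qed

lemma q_fun_derivative:
  fixes M x :: real and hv :: nat and E :: complex
  assumes x: "x > 0"
  defines "B \<equiv> root_series_trunc hv (s_idx M hv)" and "z \<equiv> zeta_fun M hv E x"
  shows "vector_derivative (q_fun M hv E) (at x)
    = of_real (x powr M) / of_real x
        * (of_real M * poly B z - of_real (M * real hv) * (z * poly (pderiv B) z))"
proof -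
  have zeta: "(zeta_fun M hv E has_vector_derivative - of_real (M * real hv) / of_real x * z) (at x)"
    unfolding zeta_fun_def z_def
    using has_vector_derivative_mult_right[OF has_vector_derivative_of_real_powr[OF x, of "- (M * real hv)"], of "- E"]
    by (simp add: algebra_simps)
  have "((\<lambda>y. of_real (y powr M) * poly B (zeta_fun M hv E y)) has_vector_derivative
          of_real (x powr M) * (- of_real (M * real hv) / of_real x * z * poly (pderiv B) z)
          + of_real M / of_real x * of_real (x powr M) * poly B z) (at x)"
    using has_vector_derivative_mult[OF has_vector_derivative_of_real_powr[OF x]
            field_vector_diff_chain_at[OF zeta poly_DERIV]]
    by (simp add: o_def z_def)
  then have "(q_fun M hv E has_vector_derivative
          of_real (x powr M) * (- of_real (M * real hv) / of_real x * z * poly (pderiv B) z)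
          + of_real M / of_real x * of_real (x powr M) * poly B z) (at x)"
    by (rule has_vector_derivative_transform_within_open[where S = "{0<..}"])
       (use x in \<open>simp_all add: q_fun_eq_trunc B_def\<close>)
  then show ?thesis
    by (simp add: vector_derivative_at algebra_simps)
qed

lemma delta_le_M_hv:
  assumes "hv \<ge> 1" "M > 0"
  shows "delta M hv \<le> M * real hv"
proof -
  have "real (s_idx M hv) \<le> (M + 1) / (real hv * M)"
    unfolding s_idx_def using assms by simp
  then have "real hv * M * real (s_idx M hv) \<le> M + 1"
    using assms by (simp add: field_simps)
  then show ?thesis unfolding delta_def by (simp add: algebra_simps)
qed

lemma zeta_fun_bigo: "zeta_fun M hv E \<in> O[at_top](\<lambda>x. of_real (x powr (- (M * real hv))))"
  by (rule bigoI[where c = "norm E"]) (simp add: zeta_fun_def norm_mult)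

lemma zeta_fun_tendsto_0:
  assumes "hv \<ge> 1" "M > 0"
  shows "(zeta_fun M hv E \<longlongrightarrow> 0) at_top"
proof -
  have "((\<lambda>x::real. x powr (- (M * real hv))) \<longlongrightarrow> 0) at_top"
    using assms by (intro tendsto_neg_powr filterlim_ident) auto
  then show ?thesis
    unfolding zeta_fun_def by (intro tendsto_mult_right_zero) (use tendsto_of_real in fastforce)
qed

lemma poly_root_series_trunc_zeta_tendsto_1:
  assumes "hv \<ge> 1" "M > 0"
  shows "((\<lambda>x. poly (root_series_trunc hv s) (zeta_fun M hv E x)) \<longlongrightarrow> 1) at_top"
proof -
  have "poly (root_series_trunc hv s) 0 = 1"
    by (simp add: poly_root_series_trunc)
  then show ?thesis
    using tendsto_poly[OF zeta_fun_tendsto_0[OF assms], of "root_series_trunc hv s"] by simp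
qed

lemma q_fun_eventually_nonzero:
  assumes "hv \<ge> 1" "M > 0"
  shows "eventually (\<lambda>x. q_fun M hv E x \<noteq> 0) at_top"
proof -
  have "eventually (\<lambda>x. poly (root_series_trunc hv (s_idx M hv)) (zeta_fun M hv E x) \<noteq> 0) at_top"
    by (rule tendsto_imp_eventually_ne[OF poly_root_series_trunc_zeta_tendsto_1[OF assms]]) simp
  with eventually_gt_at_top[of 0] show ?thesis
    by eventually_elim (simp add: q_fun_eq_trunc)
qed

lemma powr_minus_of_nat_complex: "z \<noteq> 0 \<Longrightarrow> z powr (- of_nat m) = inverse (z ^ m :: complex)"
  using powr_of_int[of z "- int m"] by simp

lemma q_fun_powr_p_fun_bigo:
  assumes hv: "hv \<ge> 1" and M: "M > 0"
  shows "(\<lambda>x. q_fun M hv E x powr (- (of_nat hv - 1)) * p_fun M hv E x - q_fun M hv E x)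
           \<in> O[at_top](\<lambda>x. of_real (x powr (- 1 - delta M hv)))"
proof -
  define s where "s = s_idx M hv"
  define B where "B = root_series_trunc hv s"
  define X where "X = (\<lambda>x::real. complex_of_real (x powr M))"
  define u where "u = (\<lambda>x::real. complex_of_real (x powr (- (M * real hv))))"
  define z where "z = zeta_fun M hv E"
  define T where "T = (\<lambda>x. poly B (z x))"
  obtain m where m: "hv = Suc m"
    using hv by (cases hv) auto
  have T1: "(T \<longlongrightarrow> 1) at_top"
    unfolding T_def B_def z_def by (rule poly_root_series_trunc_zeta_tendsto_1[OF hv M])
  have ev: "eventually (\<lambda>x. x > 0 \<and> T x \<noteq> 0) at_top"
    using eventually_conj[OF eventually_gt_at_top[of 0] tendsto_imp_eventually_ne[OF T1, of 0]]
    by simp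
  have eq: "eventually (\<lambda>x. q_fun M hv E x powr (- (of_nat hv - 1)) * p_fun M hv E x - q_fun M hv E x
          = - (X x * poly (B ^ hv - [:1, 1:]) (z x) * inverse (T x ^ m))) at_top"
    using ev
  proof eventually_elim
    case (elim x)
    have q: "q_fun M hv E x = X x * T x" and p: "p_fun M hv E x = X x ^ Suc m * (1 + z x)"
      using elim by (simp_all add: m q_fun_eq_trunc p_fun_eq X_def T_def B_def z_def s_def)
    have "X x \<noteq> 0" using elim by (simp add: X_def)
    have exponent: "- (of_nat hv - 1 :: complex) = - of_nat m"
      by (simp add: m)
    have qp: "q_fun M hv E x powr (- (of_nat hv - 1)) = inverse ((X x * T x) ^ m)"
      unfolding q exponent using elim \<open>X x \<noteq> 0\<close> by (simp add: powr_minus_of_nat_complex)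
    show ?case
      unfolding qp unfolding q p using elim \<open>X x \<noteq> 0\<close> by (simp add: m T_def field_simps)
  qed
  have "(\<lambda>x. X x * poly (B ^ hv - [:1, 1:]) (z x) * inverse (T x ^ m))
                   \<in> O[at_top](\<lambda>x. X x * u x ^ Suc s * 1)"
  proof (intro landau_o.big.mult landau_o.big_refl)
    have "(\<lambda>x. poly (B ^ hv - [:1, 1:]) (z x)) \<in> O[at_top](\<lambda>x. z x ^ Suc s)"
      using coeff_root_series_trunc_power[OF hv] zeta_fun_tendsto_0[OF hv M]
      by (intro poly_vanishing_to_order_bigo) (simp_all add: B_def z_def)
    also have "(\<lambda>x. z x ^ Suc s) \<in> O[at_top](\<lambda>x. u x ^ Suc s)"
      unfolding z_def u_def by (intro landau_o.big_power zeta_fun_bigo)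
    finally show "(\<lambda>x. poly (B ^ hv - [:1, 1:]) (z x)) \<in> O[at_top](\<lambda>x. u x ^ Suc s)" .
    show "(\<lambda>x. inverse (T x ^ m)) \<in> O[at_top](\<lambda>_. 1)"
      by (rule bigoI_tendsto[where c = 1]) (auto intro!: tendsto_eq_intros T1)
  qed
  also have "O[at_top](\<lambda>x. X x * u x ^ Suc s * 1) = O[at_top](\<lambda>x. of_real (x powr (- 1 - delta M hv)))"
    \<comment> \<open>this is exactly how \<delta> is defined\<close>
    by (rule landau_o.big.cong, use eventually_gt_at_top[of 0] in eventually_elim)
       (simp add: X_def u_def s_def delta_def powr_power powr_add[symmetric] algebra_simps
             flip: of_real_power of_real_mult)
  finally show ?thesis
    using landau_o.big.in_cong[OF eq] by simp
qed

lemma log_derivative_q_fun_bigo: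
  assumes hv: "hv \<ge> 1" and M: "M > 0"
  shows "(\<lambda>x. of_real M / of_real x - vector_derivative (q_fun M hv E) (at x) / q_fun M hv E x)
           \<in> O[at_top](\<lambda>x. of_real (x powr (- 1 - delta M hv)))"
proof -
  define B where "B = root_series_trunc hv (s_idx M hv)"
  define z where "z = zeta_fun M hv E"
  define T where "T = (\<lambda>x. poly B (z x))"
  define u where "u = (\<lambda>x::real. complex_of_real (x powr (- (M * real hv))))"
  have z0: "(z \<longlongrightarrow> 0) at_top"
    unfolding z_def by (rule zeta_fun_tendsto_0[OF hv M])
  have T1: "(T \<longlongrightarrow> 1) at_top"
    unfolding T_def B_def z_def by (rule poly_root_series_trunc_zeta_tendsto_1[OF hv M])
  have ev: "eventually (\<lambda>x. x > 0 \<and> T x \<noteq> 0) at_top"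
    using eventually_conj[OF eventually_gt_at_top[of 0] tendsto_imp_eventually_ne[OF T1, of 0]]
    by simp
  have eq: "eventually (\<lambda>x. of_real M / of_real x - vector_derivative (q_fun M hv E) (at x) / q_fun M hv E x
          = of_real (M * real hv) * (inverse (of_real x) * z x) * (poly (pderiv B) (z x) / T x)) at_top"
    using ev
  proof eventually_elim
    case (elim x)
    then have "x powr M \<noteq> 0" by simp
    with elim show ?case
      by (simp add: q_fun_derivative q_fun_eq_trunc B_def z_def T_def field_simps)
  qed
  have "(\<lambda>x. of_real (M * real hv) * (inverse (of_real x) * z x) * (poly (pderiv B) (z x) / T x))
                   \<in> O[at_top](\<lambda>x. of_real (M * real hv) * (inverse (of_real x) * u x) * 1)"
  proof (intro landau_o.big.mult landau_o.big_refl)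
    show "z \<in> O[at_top](u)"
      unfolding z_def u_def by (rule zeta_fun_bigo)
    show "(\<lambda>x. poly (pderiv B) (z x) / T x) \<in> O[at_top](\<lambda>_. 1)"
      by (rule bigoI_tendsto[where c = "poly (pderiv B) 0"]) (auto intro!: tendsto_eq_intros T1 z0)
  qed
  also have "O[at_top](\<lambda>x. of_real (M * real hv) * (inverse (of_real x) * u x) * 1)
      = O[at_top](\<lambda>x. of_real (M * real hv) * of_real (x powr (- 1 - M * real hv)))"
    by (rule landau_o.big.cong, use eventually_gt_at_top[of 0] in eventually_elim)
       (simp add: u_def powr_diff powr_minus field_simps)
  also have "(\<lambda>x. of_real (M * real hv) * complex_of_real (x powr (- 1 - M * real hv)))
                   \<in> O[at_top](\<lambda>x. of_real (x powr (- 1 - delta M hv)))"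
    using delta_le_M_hv[OF hv M] by (simp add: landau_o.big.of_real_iff powr_bigo_iff filterlim_ident)
  finally show ?thesis
    using landau_o.big.in_cong[OF eq] by simp
qed


lemma gauge_L_conn_component_bigo:
  assumes lie: "lie_bracket br" and "br h l = 0" "br h e = e" "br h a0 = - (of_nat hv - 1) *s a0"
    and hv: "hv \<ge> 1" and M: "M > 0"
  shows "(\<lambda>x. norm (fst (gauge br h (q_fun M hv E) (L_conn l e a0 M hv E) x) k
                   - fst (target_conn l h e a0 M hv E x) k))
           \<in> O[at_top](\<lambda>x. x powr (- 1 - delta M hv))"
proof -
  define a where "a x = of_real M / of_real x - vector_derivative (q_fun M hv E) (at x) / q_fun M hv E x" for x
  define b where "b x = q_fun M hv E x powr (- (of_nat hv - 1)) * p_fun M hv E x - q_fun M hv E x" for x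
  define R where "R x = (if k = 0 then a x *s h else if k = 1 then b x *s a0 else 0)" for x
  have "eventually (\<lambda>x. fst (gauge br h (q_fun M hv E) (L_conn l e a0 M hv E) x) k
                         - fst (target_conn l h e a0 M hv E x) k = R x) at_top"
    using q_fun_eventually_nonzero[OF hv M]
    by eventually_elim (unfold R_def a_def b_def, rule gauge_L_conn_minus_target[OF lie assms(2-4)])
  then have norm_eq: "eventually (\<lambda>x. norm (fst (gauge br h (q_fun M hv E) (L_conn l e a0 M hv E) x) k
                         - fst (target_conn l h e a0 M hv E x) k) = norm (R x)) at_top"
    by eventually_elim (simp only:)
  have bound: "(\<lambda>x. norm (R x)) \<in> O[at_top](\<lambda>x. x powr (- 1 - delta M hv))"
    using norm_smult_vec_bigo[OF log_derivative_q_fun_bigo[OF hv M, of E, folded a_def], where w = h]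
      norm_smult_vec_bigo[OF q_fun_powr_p_fun_bigo[OF hv M, of E, folded b_def], where w = a0]
    unfolding R_def by (cases "k = 0"; cases "k = 1") (simp_all only: if_True if_False simp_thms, simp)
  show ?thesis
    using landau_o.big.in_cong[OF norm_eq] bound by simp
qed

theorem lemma3p1:
  fixes br :: "complex^'d \<Rightarrow> complex^'d \<Rightarrow> complex^'d"
    and n :: nat and A :: "nat \<Rightarrow> nat \<Rightarrow> int"
    and e f hh :: "nat \<Rightarrow> complex^'d"
    and a0 l h :: "complex^'d" and M :: real and E :: complex
  assumes "simple_ADE br n A e f hh"
    and "a0 \<in> lowest_root_space br n A hh" and "a0 \<noteq> 0"
    and "l \<in> cartan n hh" and "M > 0"
    and "h \<in> cartan n hh"
    and "br h (\<Sum>i\<in>{1..n}. e i) = (\<Sum>i\<in>{1..n}. e i)"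
    and "br h a0 = - (of_nat (dual_coxeter br n A hh) - 1) *s a0"
  shows "\<forall>k. (\<lambda>x. norm (fst (gauge br h (q_fun M (dual_coxeter br n A hh) E)
                  (L_conn l (\<Sum>i\<in>{1..n}. e i) a0 M (dual_coxeter br n A hh) E) x) k
               - fst (target_conn l h (\<Sum>i\<in>{1..n}. e i) a0 M (dual_coxeter br n A hh) E x) k))
             \<in> O[at_top](\<lambda>x. x powr (- 1 - delta M (dual_coxeter br n A hh)))
         \<and> (\<lambda>x. norm (snd (gauge br h (q_fun M (dual_coxeter br n A hh) E)
                  (L_conn l (\<Sum>i\<in>{1..n}. e i) a0 M (dual_coxeter br n A hh) E) x)
               - snd (target_conn l h (\<Sum>i\<in>{1..n}. e i) a0 M (dual_coxeter br n A hh) E x)))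
             \<in> O[at_top](\<lambda>x. x powr (- 1 - delta M (dual_coxeter br n A hh)))"
  \<comment> \<open>only the ad h-eigenvalue of a0 matters\<close>
proof -
  have hv: "dual_coxeter br n A hh \<ge> 1"
    unfolding dual_coxeter_def by simp
  have lie: "lie_bracket br"
    using assms(1) unfolding simple_ADE_def by blast
  have "br h l = 0"
    by (rule bracket_cartan_cartan[OF assms(1,6,4)])
  from gauge_L_conn_component_bigo[OF lie this assms(7,8) hv assms(5)] show ?thesis
    by (simp add: gauge_def L_conn_def target_conn_def)
qed

end
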